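(* Let $X$ be a non-empty set, $\overline X=X\cup X'$ and $\widetilde X=\overline X\cup\{(x\wedge y):x,y\in\overline X\}$. The relation $\widetilde\Theta(\mathcal{CS},X)=\{(u,v)\in\widetilde X^+\times\widetilde X^+:\overline u=\overline v\}$ on the free semigroup $\widetilde X^+$ equals the semigroup congruence on $\widetilde X^+$ generated by $\mathrm I\cup\Upsilon_3\cup\Upsilon_4\cup\Upsilon_5$, where $\mathrm I=\{(xx'x,x):x\in\overline X\}$, $\Upsilon_3=\{((x\wedge y)(x\wedge z),(x\wedge z)):x,y,z\in\overline X\}$, $\Upsilon_4=\{((z\wedge x)(y\wedge x),(z\wedge x)):x,y,z\in\overline X\}$, $\Upsilon_5=\{(x'x,(x'\wedge x)):x\in\overline X\}$.
   Context: $X'=\{x':x\in X\}$ is a set disjoint from $X$ in bijection with $X$ via $x\mapsto x'$; extend $'$ to $\overline X$ by $(x')'=x$. The free binary semigroup $F_2(\overline X)$ is the smallest set of nonempty words over $\overline X\cup\{(,\wedge,)\}$ containing $\overline X$ and closed under concatenation and under $(u,v)\mapsto(u\wedge v)$. The symbols $(x\wedge y)$, $x,y\in\overline X$, are treated as single letters of the alphabet $\widetilde X$, and $\widetilde X^+\subseteq F_2(\overline X)$. For a term $w$, $\iota w$ [$w\tau$] is the first [last] element of $\overline X$ in $w$. Reductions ($u,v$ terms, $x,y,z\in\overline X$): (R0) $(u\wedge v)\rightsquigarrow(\iota u\wedge v\tau)$; (R1) $x(y\wedge x)\rightsquigarrow x$; (R2) $(x\wedge y)x\rightsquigarrow x$;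 (R3) $(x\wedge y)(x\wedge z)\rightsquigarrow(x\wedge z)$; (R4) $(z\wedge x)(y\wedge x)\rightsquigarrow(z\wedge x)$; (R5) $x'x\rightsquigarrow(x'\wedge x)$, applied to segments. It is known (Auinger) that every term has a unique reduced form $\overline w$ (no reduction applicable) obtainable by finitely many reductions; moreover $\widetilde\Theta(\mathcal{CS},X)$ is a congruence on $\widetilde X^+$ whose quotient is the bifree completely simple semigroup on $X$, and a pair $(u,v)$ lies in it iff the bi-identity $u\,\hat=\,v$ holds in all completely simple semigroups. *)

theory Defs
  imports Main
begin

text \<open>Letters of the doubled alphabet: a pair (x, b) with x in X; b = False encodes x,
  b = True encodes the primed copy x'. Priming flips the flag, so (x')' = x.\<close>

type_synonym 'a bar = "'a \<times> bool"

definition pr :: "'a bar \<Rightarrow> 'a bar" where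
  "pr a = (fst a, \<not> snd a)"

definition Xbar :: "'a set \<Rightarrow> 'a bar set" where
  "Xbar X = {a. fst a \<in> X}"

text \<open>Terms of the free binary semigroup: nonempty lists of atoms, an atom being a
  letter or a wedge (u \<and> v) of two terms.\<close>

datatype 'b atom = L 'b | W "'b atom list" "'b atom list"

fun iota :: "'b atom list \<Rightarrow> 'b" where
  "iota [] = undefined"
| "iota (L a # _) = a"
| "iota (W u v # _) = iota u"

fun tau :: "'b atom list \<Rightarrow> 'b" where
  "tau [] = undefined"
| "tau [L a] = a"
| "tau [W u v] = tau v"
| "tau (a # b # r) = tau (b # r)"

inductive red_local :: "'a bar atom list \<Rightarrow> 'a bar atom list \<Rightarrow> bool" where
  R0: "[W u v] \<noteq> [W [L (iota u)] [L (tau v)]] \<Longrightarrow>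
       red_local [W u v] [W [L (iota u)] [L (tau v)]]"
| R1: "red_local [L x, W [L y] [L x]] [L x]"
| R2: "red_local [W [L x] [L y], L x] [L x]"
| R3: "red_local [W [L x] [L y], W [L x] [L z]] [W [L x] [L z]]"
| R4: "red_local [W [L z] [L x], W [L y] [L x]] [W [L z] [L x]]"
| R5: "red_local [L (pr x), L x] [W [L (pr x)] [L x]]"

inductive red :: "'a bar atom list \<Rightarrow> 'a bar atom list \<Rightarrow> bool" where
  seg: "red_local s t \<Longrightarrow> red (p @ s @ q) (p @ t @ q)"
| inl: "red u u' \<Longrightarrow> red (p @ [W u v] @ q) (p @ [W u' v] @ q)"
| inr: "red v v' \<Longrightarrow> red (p @ [W u v] @ q) (p @ [W u v'] @ q)"

definition reduced :: "'a bar atom list \<Rightarrow> bool" where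
  "reduced w \<longleftrightarrow> (\<nexists>w'. red w w')"

definition rform :: "'a bar atom list \<Rightarrow> 'a bar atom list" where
  "rform w = (THE r. red\<^sup>*\<^sup>* w r \<and> reduced r)"

definition Xtilde :: "'a set \<Rightarrow> 'a bar atom set" where
  "Xtilde X = L ` Xbar X \<union> {W [L x] [L y] | x y. x \<in> Xbar X \<and> y \<in> Xbar X}"

definition Xplus :: "'a set \<Rightarrow> 'a bar atom list set" where
  "Xplus X = {w. w \<noteq> [] \<and> set w \<subseteq> Xtilde X}"

definition Theta :: "'a set \<Rightarrow> ('a bar atom list \<times> 'a bar atom list) set" where
  "Theta X = {(u, v). u \<in> Xplus X \<and> v \<in> Xplus X \<and> rform u = rform v}"

inductive_set cong_gen :: "'a set \<Rightarrow> ('a bar atom list \<times> 'a bar atom list) set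
    \<Rightarrow> ('a bar atom list \<times> 'a bar atom list) set"
  for X R where
  base: "(u, v) \<in> R \<Longrightarrow> (u, v) \<in> cong_gen X R"
| refl: "u \<in> Xplus X \<Longrightarrow> (u, u) \<in> cong_gen X R"
| sym: "(u, v) \<in> cong_gen X R \<Longrightarrow> (v, u) \<in> cong_gen X R"
| trans: "(u, v) \<in> cong_gen X R \<Longrightarrow> (v, w) \<in> cong_gen X R \<Longrightarrow> (u, w) \<in> cong_gen X R"
| mult: "(u, v) \<in> cong_gen X R \<Longrightarrow> set p \<subseteq> Xtilde X \<Longrightarrow> set q \<subseteq> Xtilde X \<Longrightarrow>
         (p @ u @ q, p @ v @ q) \<in> cong_gen X R"

definition GenI :: "'a set \<Rightarrow> ('a bar atom list \<times> 'a bar atom list) set" where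
  "GenI X = {([L x, L (pr x), L x], [L x]) | x. x \<in> Xbar X}"

definition Ups3 :: "'a set \<Rightarrow> ('a bar atom list \<times> 'a bar atom list) set" where
  "Ups3 X = {([W [L x] [L y], W [L x] [L z]], [W [L x] [L z]]) | x y z.
              x \<in> Xbar X \<and> y \<in> Xbar X \<and> z \<in> Xbar X}"

definition Ups4 :: "'a set \<Rightarrow> ('a bar atom list \<times> 'a bar atom list) set" where
  "Ups4 X = {([W [L z] [L x], W [L y] [L x]], [W [L z] [L x]]) | x y z.
              x \<in> Xbar X \<and> y \<in> Xbar X \<and> z \<in> Xbar X}"

definition Ups5 :: "'a set \<Rightarrow> ('a bar atom list \<times> 'a bar atom list) set" where
  "Ups5 X = {([L (pr x), L x], [W [L (pr x)] [L x]]) | x. x \<in> Xbar X}"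

end

theory Submission
  imports Defs "HOL-Library.Confluence"
begin

(* On words over X-tilde the reductions R0--R5 act only by contracting two adjacent letters
  into one: wedges already have single letters as arguments, so R0 and reductions inside a
  wedge never apply. Contraction shortens words, and two overlapping contractions are rejoined
  by at most one further contraction on either side, so contraction is terminating and
  strongly confluent. The reduced form of a word is thus its unique contraction normal form;
  it is compatible with multiplication, and each generating pair contracts to its right-hand
  side. Conversely every contraction is a consequence of the generators: R3, R4, R5 are
  generators, and R1 follows from
  x (y\<and>x) ~ x x' x (y\<and>x) ~ x (x'\<and>x) (y\<and>x) ~ x (x'\<and>x) ~ x x' x ~ x,
  R2 dually. *)

lemma pr_pr [simp]: "pr (pr x) = x"
  by (simp add: pr_def)

lemma pr_in_Xbar [simp]: "pr x \<in> Xbar X \<longleftrightarrow> x \<in> Xbar X"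
  by (simp add: pr_def Xbar_def)

lemma L_in_Xtilde [simp]: "L x \<in> Xtilde X \<longleftrightarrow> x \<in> Xbar X"
  by (auto simp: Xtilde_def)

lemma W_in_Xtilde [simp]:
  "W u v \<in> Xtilde X \<longleftrightarrow> (\<exists>x y. u = [L x] \<and> v = [L y] \<and> x \<in> Xbar X \<and> y \<in> Xbar X)"
  by (auto simp: Xtilde_def)

section \<open>Contraction of adjacent letters\<close>

definition contract :: "'a bar atom list \<Rightarrow> 'a bar atom list \<Rightarrow> bool" where
  "contract w w' \<longleftrightarrow>
     (\<exists>p q a b c. w = p @ a # b # q \<and> w' = p @ c # q \<and> red_local [a, b] [c])"

lemma contractI: "red_local [a, b] [c] \<Longrightarrow> contract (p @ a # b # q) (p @ c # q)"
  unfolding contract_def by blast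

lemma contract_length_less: "contract w w' \<Longrightarrow> length w' < length w"
  unfolding contract_def by auto

lemma contract_append:
  "contract u v \<Longrightarrow> contract (p @ u @ q) (p @ v @ q)"
  unfolding contract_def by (metis append.assoc append_Cons)

lemma contract_rtranclp_append:
  "contract\<^sup>*\<^sup>* u v \<Longrightarrow> contract\<^sup>*\<^sup>* (p @ u @ q) (p @ v @ q)"
  by (induction rule: rtranclp_induct) (auto intro: contract_append rtranclp.rtrancl_into_rtrancl)

lemma red_local_pair_unique: "red_local [a, b] [c] \<Longrightarrow> red_local [a, b] [c'] \<Longrightarrow> c = c'"
  by (auto elim!: red_local.cases)

lemma red_local_R5_swapped: "red_local [L x, L (pr x)] [W [L x] [L (pr x)]]"
  using red_local.R5[of "pr x"] by simp

lemma red_local_overlap: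
  assumes "red_local [a, b] [d]" and "red_local [b, c] [e]"
  shows "[d, c] = [a, e] \<or> (\<exists>z. red_local [d, c] [z] \<and> red_local [a, e] [z])"
  using assms
  apply (cases rule: red_local.cases)
      apply (auto elim!: red_local.cases intro: red_local.intros red_local_R5_swapped)
   apply (metis red_local.R5 red_local.R3)
  apply (metis red_local.R1 red_local.R2 pr_pr)
  done

lemma contract_diamond_ordered:
  assumes eq: "p1 @ a # b # q1 = p2 @ a' # b' # q2" and le: "length p1 \<le> length p2"
    and r1: "red_local [a, b] [c]" and r2: "red_local [a', b'] [c']"
  shows "\<exists>u. contract\<^sup>=\<^sup>= (p1 @ c # q1) u \<and> contract\<^sup>=\<^sup>= (p2 @ c' # q2) u"
proof (cases "length p1 = length p2")
  case True
  with eq have "p1 = p2" "a = a'" "b = b'" "q1 = q2"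
    by (simp_all add: append_eq_append_conv)
  with r1 r2 show ?thesis
    using red_local_pair_unique by blast
next
  case False
  with le have "length p1 < length p2" by simp
  with eq obtain us where "p2 = p1 @ us" "a # b # q1 = us @ a' # b' # q2" "us \<noteq> []"
    by (auto simp: append_eq_append_conv2)
  then obtain r where p2: "p2 = p1 @ a # r" and r: "b # q1 = r @ a' # b' # q2"
    by (cases us) auto
  show ?thesis
  proof (cases r)
    case Nil
    with r have "b = a'" "q1 = b' # q2" by auto
    with r2 have "red_local [b, b'] [c']" by simp
    from red_local_overlap[OF r1 this] show ?thesis
    proof
      assume "[c, b'] = [a, c']"
      with p2 Nil \<open>q1 = b' # q2\<close> show ?thesis by auto
    next
      assume "\<exists>z. red_local [c, b'] [z] \<and> red_local [a, c'] [z]"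
      then obtain z where "red_local [c, b'] [z]" "red_local [a, c'] [z]" by blast
      then have "contract (p1 @ c # b' # q2) (p1 @ z # q2)"
        and "contract (p1 @ a # c' # q2) (p1 @ z # q2)"
        by (auto intro: contractI)
      with p2 Nil \<open>q1 = b' # q2\<close> show ?thesis by auto
    qed
  next
    case (Cons b0 r')
    with r have q1: "q1 = r' @ a' # b' # q2" and "b0 = b" by auto
    have "contract (p1 @ c # q1) ((p1 @ c # r') @ c' # q2)"
      using contractI[OF r2, of "p1 @ c # r'" q2] q1 by simp
    moreover have "contract (p2 @ c' # q2) (p1 @ c # r' @ c' # q2)"
      using contractI[OF r1, of p1 "r' @ c' # q2"] p2 Cons \<open>b0 = b\<close> by simp
    ultimately show ?thesis by auto
  qed
qed

lemma contract_diamond: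
  assumes "contract w w1" and "contract w w2"
  shows "\<exists>u. contract\<^sup>=\<^sup>= w1 u \<and> contract\<^sup>=\<^sup>= w2 u"
proof -
  from assms obtain p1 q1 a1 b1 c1 p2 q2 a2 b2 c2 where
    w: "w = p1 @ a1 # b1 # q1" "w = p2 @ a2 # b2 # q2" and
    w1: "w1 = p1 @ c1 # q1" and w2: "w2 = p2 @ c2 # q2" and
    r: "red_local [a1, b1] [c1]" "red_local [a2, b2] [c2]"
    unfolding contract_def by blast
  show ?thesis
  proof (cases "length p1 \<le> length p2")
    case True
    from contract_diamond_ordered[OF w(1)[symmetric, THEN HOL.trans, OF w(2)] True r]
    show ?thesis unfolding w1 w2 .
  next
    case False
    then have "length p2 \<le> length p1" by simp
    from contract_diamond_ordered[OF w(2)[symmetric, THEN HOL.trans, OF w(1)] this r(2,1)]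
    show ?thesis unfolding w1 w2 by blast
  qed
qed

lemma confluentp_contract: "confluentp contract"
  by (rule strong_confluentp_imp_confluentp, rule strong_confluentpI)
    (use contract_diamond in \<open>blast intro: r_into_rtranclp\<close>)

lemma contract_normal_form_exists: "\<exists>r. contract\<^sup>*\<^sup>* w r \<and> (\<nexists>r'. contract r r')"
proof (induction w rule: measure_induct_rule[where f = length])
  case (less w)
  show ?case
  proof (cases "\<exists>w'. contract w w'")
    case True
    then obtain w' where "contract w w'" by blast
    with less[OF contract_length_less[OF this]] show ?thesis
      by (meson converse_rtranclp_into_rtranclp)
  qed blast
qed

lemma contract_normal_form_unique:
  assumes "contract\<^sup>*\<^sup>* w r1" "\<nexists>r'. contract r1 r'"
    and "contract\<^sup>*\<^sup>* w r2" "\<nexists>r'. contract r2 r'"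
  shows "r1 = r2"
proof -
  obtain u where "contract\<^sup>*\<^sup>* r1 u" "contract\<^sup>*\<^sup>* r2 u"
    using confluentpD[OF confluentp_contract assms(1,3)] by blast
  with assms(2,4) show ?thesis
    by (metis converse_rtranclpE)
qed

section \<open>Reduced forms of words over X-tilde\<close>

lemma red_of_contract: "contract w w' \<Longrightarrow> red w w'"
  unfolding contract_def using red.seg by fastforce

lemma not_red_letter: "\<not> red [L x] w'"
proof
  assume "red [L x] w'"
  then show False
    by cases (auto simp: Cons_eq_append_conv elim: red_local.cases)
qed

lemma contract_of_red:
  assumes "red w w'" and "set w \<subseteq> Xtilde X"
  shows "contract w w'"
  using assms(1)
proof cases
  case (seg s t p q)
  from seg(3) show ?thesis
  proof cases
    case (R0 u v)
    with seg assms(2) show ?thesis by auto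
  qed (use seg in \<open>auto intro: contractI[simplified]\<close>)
next
  case (inl u u' p v q)
  with assms(2) obtain x where "u = [L x]" by auto
  with inl not_red_letter show ?thesis by blast
next
  case (inr v v' p u q)
  with assms(2) obtain x where "v = [L x]" by auto
  with inr not_red_letter show ?thesis by blast
qed

lemma red_local_Xtilde:
  "red_local [a, b] [c] \<Longrightarrow> a \<in> Xtilde X \<Longrightarrow> b \<in> Xtilde X \<Longrightarrow> c \<in> Xtilde X"
  by (erule red_local.cases) auto

lemma contract_Xplus: "contract w w' \<Longrightarrow> w \<in> Xplus X \<Longrightarrow> w' \<in> Xplus X"
  unfolding contract_def Xplus_def using red_local_Xtilde by fastforce

lemma contract_rtranclp_Xplus: "contract\<^sup>*\<^sup>* w w' \<Longrightarrow> w \<in> Xplus X \<Longrightarrow> w' \<in> Xplus X"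
  by (induction rule: rtranclp_induct) (auto intro: contract_Xplus)

lemma red_rtranclp_imp_contract:
  "red\<^sup>*\<^sup>* w w' \<Longrightarrow> w \<in> Xplus X \<Longrightarrow> contract\<^sup>*\<^sup>* w w'"
proof (induction rule: rtranclp_induct)
  case (step w' w'')
  then have "w' \<in> Xplus X" using contract_rtranclp_Xplus by blast
  with step show ?case
    using contract_of_red by (fastforce simp: Xplus_def)
qed simp

lemma rform_eqI:
  assumes w: "w \<in> Xplus X" and r: "contract\<^sup>*\<^sup>* w r" "\<nexists>r'. contract r r'"
  shows "rform w = r"
  unfolding rform_def
proof (rule the_equality)
  have "red\<^sup>*\<^sup>* w r"
    using r(1) by (induction rule: rtranclp_induct) (auto intro: red_of_contract rtranclp.intros)
  moreover have "reduced r"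
    using contract_rtranclp_Xplus[OF r(1) w] r(2) contract_of_red
    unfolding reduced_def Xplus_def by blast
  ultimately show "red\<^sup>*\<^sup>* w r \<and> reduced r" ..
next
  fix r' assume "red\<^sup>*\<^sup>* w r' \<and> reduced r'"
  then show "r' = r"
    using contract_normal_form_unique r red_rtranclp_imp_contract[OF _ w] red_of_contract
    unfolding reduced_def by blast
qed

lemma rform_contract: "w \<in> Xplus X \<Longrightarrow> contract\<^sup>*\<^sup>* w (rform w)"
  using contract_normal_form_exists rform_eqI by metis

lemma rform_contract_eq:
  assumes "w \<in> Xplus X" and "contract\<^sup>*\<^sup>* w w'"
  shows "rform w' = rform w"
proof -
  obtain r where "contract\<^sup>*\<^sup>* w' r" "\<nexists>r'. contract r r'"
    using contract_normal_form_exists by blast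
  with assms show ?thesis
    using rform_eqI contract_rtranclp_Xplus rtranclp_trans by metis
qed

lemma rform_append:
  assumes "w \<in> Xplus X" and "set p \<subseteq> Xtilde X" and "set q \<subseteq> Xtilde X"
  shows "rform (p @ rform w @ q) = rform (p @ w @ q)"
proof (rule rform_contract_eq)
  show "p @ w @ q \<in> Xplus X"
    using assms unfolding Xplus_def by auto
  show "contract\<^sup>*\<^sup>* (p @ w @ q) (p @ rform w @ q)"
    using contract_rtranclp_append[OF rform_contract[OF assms(1)]] .
qed

section \<open>The congruence generated by the four families of pairs\<close>

abbreviation CS_gens :: "'a set \<Rightarrow> ('a bar atom list \<times> 'a bar atom list) set" where
  "CS_gens X \<equiv> GenI X \<union> Ups3 X \<union> Ups4 X \<union> Ups5 X"

lemma GenI_I: "x \<in> Xbar X \<Longrightarrow> ([L x, L (pr x), L x], [L x]) \<in> GenI X"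
  unfolding GenI_def by blast

lemma Ups3_I:
  "x \<in> Xbar X \<Longrightarrow> y \<in> Xbar X \<Longrightarrow> z \<in> Xbar X \<Longrightarrow>
    ([W [L x] [L y], W [L x] [L z]], [W [L x] [L z]]) \<in> Ups3 X"
  unfolding Ups3_def by blast

lemma Ups4_I:
  "x \<in> Xbar X \<Longrightarrow> y \<in> Xbar X \<Longrightarrow> z \<in> Xbar X \<Longrightarrow>
    ([W [L z] [L x], W [L y] [L x]], [W [L z] [L x]]) \<in> Ups4 X"
  unfolding Ups4_def by blast

lemma Ups5_I: "x \<in> Xbar X \<Longrightarrow> ([L (pr x), L x], [W [L (pr x)] [L x]]) \<in> Ups5 X"
  unfolding Ups5_def by blast

lemma cong_gen_append:
  "(u, v) \<in> R \<Longrightarrow> set p \<subseteq> Xtilde X \<Longrightarrow> set q \<subseteq> Xtilde X \<Longrightarrow>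
    (p @ u @ q, p @ v @ q) \<in> cong_gen X R"
  by (intro cong_gen.mult cong_gen.base)

lemma cong_gen_R1:
  assumes x: "x \<in> Xbar X" and y: "y \<in> Xbar X"
  shows "([L x, W [L y] [L x]], [L x]) \<in> cong_gen X (CS_gens X)"
proof -
  let ?C = "cong_gen X (CS_gens X)"
  note cong_gen.trans [trans]
  have I: "([L x, L (pr x), L x], [L x]) \<in> CS_gens X"
    using GenI_I[OF x] by simp
  have U5: "([L (pr x), L x], [W [L (pr x)] [L x]]) \<in> CS_gens X"
    using Ups5_I[OF x] by simp
  have U4: "([W [L (pr x)] [L x], W [L y] [L x]], [W [L (pr x)] [L x]]) \<in> CS_gens X"
    using Ups4_I[of x X y "pr x"] x y by simp
  have "([L x, W [L y] [L x]], [L x, L (pr x), L x, W [L y] [L x]]) \<in> ?C"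
    using cong_gen.sym[OF cong_gen_append[OF I, where p = "[]" and q = "[W [L y] [L x]]"]] x y by simp
  also have "([L x, L (pr x), L x, W [L y] [L x]], [L x, W [L (pr x)] [L x], W [L y] [L x]]) \<in> ?C"
    using cong_gen_append[OF U5, where p = "[L x]" and q = "[W [L y] [L x]]"] x y by simp
  also have "([L x, W [L (pr x)] [L x], W [L y] [L x]], [L x, W [L (pr x)] [L x]]) \<in> ?C"
    using cong_gen_append[OF U4, where p = "[L x]" and q = "[]"] x by simp
  also have "([L x, W [L (pr x)] [L x]], [L x, L (pr x), L x]) \<in> ?C"
    using cong_gen.sym[OF cong_gen_append[OF U5, where p = "[L x]" and q = "[]"]] x by simp
  also have "([L x, L (pr x), L x], [L x]) \<in> ?C"
    using I by (rule cong_gen.base)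
  finally show ?thesis .
qed

lemma cong_gen_R2:
  assumes x: "x \<in> Xbar X" and y: "y \<in> Xbar X"
  shows "([W [L x] [L y], L x], [L x]) \<in> cong_gen X (CS_gens X)"
proof -
  let ?C = "cong_gen X (CS_gens X)"
  note cong_gen.trans [trans]
  have I: "([L x, L (pr x), L x], [L x]) \<in> CS_gens X"
    using GenI_I[OF x] by simp
  have U5: "([L x, L (pr x)], [W [L x] [L (pr x)]]) \<in> CS_gens X"
    using Ups5_I[of "pr x" X] x by simp
  have U3: "([W [L x] [L y], W [L x] [L (pr x)]], [W [L x] [L (pr x)]]) \<in> CS_gens X"
    using Ups3_I[of x X y "pr x"] x y by simp
  have "([W [L x] [L y], L x], [W [L x] [L y], L x, L (pr x), L x]) \<in> ?C"
    using cong_gen.sym[OF cong_gen_append[OF I, where p = "[W [L x] [L y]]" and q = "[]"]] x y by simp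
  also have "([W [L x] [L y], L x, L (pr x), L x], [W [L x] [L y], W [L x] [L (pr x)], L x]) \<in> ?C"
    using cong_gen_append[OF U5, where p = "[W [L x] [L y]]" and q = "[L x]"] x y by simp
  also have "([W [L x] [L y], W [L x] [L (pr x)], L x], [W [L x] [L (pr x)], L x]) \<in> ?C"
    using cong_gen_append[OF U3, where p = "[]" and q = "[L x]"] x by simp
  also have "([W [L x] [L (pr x)], L x], [L x, L (pr x), L x]) \<in> ?C"
    using cong_gen.sym[OF cong_gen_append[OF U5, where p = "[]" and q = "[L x]"]] x by simp
  also have "([L x, L (pr x), L x], [L x]) \<in> ?C"
    using I by (rule cong_gen.base)
  finally show ?thesis .
qed

lemma red_local_cong_gen:
  assumes "red_local [a, b] [c]" and "a \<in> Xtilde X" "b \<in> Xtilde X"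
  shows "([a, b], [c]) \<in> cong_gen X (CS_gens X)"
  using assms(1)
proof cases
  case (R1 x y)
  with assms show ?thesis using cong_gen_R1[of x X y] by simp
next
  case (R2 x y)
  with assms show ?thesis using cong_gen_R2[of x X y] by simp
next
  case (R3 x y z)
  with assms show ?thesis using Ups3_I[of x X y z] by (simp add: cong_gen.base)
next
  case (R4 z x y)
  with assms show ?thesis using Ups4_I[of x X y z] by (simp add: cong_gen.base)
next
  case (R5 x)
  with assms show ?thesis using Ups5_I[of x X] by (simp add: cong_gen.base)
qed

lemma contract_cong_gen:
  assumes "contract u v" and "u \<in> Xplus X"
  shows "(u, v) \<in> cong_gen X (CS_gens X)"
proof -
  from assms(1) obtain p q a b c where
    u: "u = p @ a # b # q" and v: "v = p @ c # q" and r: "red_local [a, b] [c]"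
    unfolding contract_def by blast
  with assms(2) have "set p \<subseteq> Xtilde X" "set q \<subseteq> Xtilde X" "a \<in> Xtilde X" "b \<in> Xtilde X"
    unfolding Xplus_def by auto
  with red_local_cong_gen[OF r] show ?thesis
    unfolding u v using cong_gen.mult by fastforce
qed

lemma contract_rtranclp_cong_gen:
  "contract\<^sup>*\<^sup>* u v \<Longrightarrow> u \<in> Xplus X \<Longrightarrow> (u, v) \<in> cong_gen X (CS_gens X)"
proof (induction rule: rtranclp_induct)
  case base
  then show ?case by (rule cong_gen.refl)
next
  case (step v w)
  then show ?case
    using contract_rtranclp_Xplus contract_cong_gen cong_gen.trans by blast
qed

lemma Theta_subset_cong_gen: "Theta X \<subseteq> cong_gen X (CS_gens X)"
proof clarify
  fix u v assume "(u, v) \<in> Theta X"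
  then have u: "u \<in> Xplus X" and v: "v \<in> Xplus X" and "rform u = rform v"
    unfolding Theta_def by auto
  then show "(u, v) \<in> cong_gen X (CS_gens X)"
    using contract_rtranclp_cong_gen[OF rform_contract[OF u] u]
      contract_rtranclp_cong_gen[OF rform_contract[OF v] v]
    by (metis cong_gen.sym cong_gen.trans)
qed

lemma contract_pairI: "red_local [a, b] [c] \<Longrightarrow> contract [a, b] [c]"
  using contractI[where p = "[]" and q = "[]"] by simp

lemma CS_gens_contract:
  assumes "(u, v) \<in> CS_gens X"
  shows "u \<in> Xplus X \<and> contract\<^sup>*\<^sup>* u v"
  using assms
proof (elim UnE)
  assume "(u, v) \<in> GenI X"
  then obtain x where x: "x \<in> Xbar X" and uv: "u = [L x, L (pr x), L x]" "v = [L x]"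
    unfolding GenI_def by blast
  have "contract [L x, L (pr x), L x] [L x, W [L (pr x)] [L x]]"
    using contractI[OF red_local.R5[of x], of "[L x]" "[]"] by simp
  moreover have "contract [L x, W [L (pr x)] [L x]] [L x]"
    using contract_pairI[OF red_local.R1] .
  ultimately show ?thesis
    using x unfolding uv Xplus_def by auto
next
  assume "(u, v) \<in> Ups3 X"
  then obtain x y z where "x \<in> Xbar X" "y \<in> Xbar X" "z \<in> Xbar X"
    and "u = [W [L x] [L y], W [L x] [L z]]" "v = [W [L x] [L z]]"
    unfolding Ups3_def by blast
  then show ?thesis
    using contract_pairI[OF red_local.R3[of x y z]] unfolding Xplus_def by auto
next
  assume "(u, v) \<in> Ups4 X"
  then obtain x y z where "x \<in> Xbar X" "y \<in> Xbar X" "z \<in> Xbar X"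
    and "u = [W [L z] [L x], W [L y] [L x]]" "v = [W [L z] [L x]]"
    unfolding Ups4_def by blast
  then show ?thesis
    using contract_pairI[OF red_local.R4[of z x y]] unfolding Xplus_def by auto
next
  assume "(u, v) \<in> Ups5 X"
  then obtain x where "x \<in> Xbar X" "u = [L (pr x), L x]" "v = [W [L (pr x)] [L x]]"
    unfolding Ups5_def by blast
  then show ?thesis
    using contract_pairI[OF red_local.R5[of x]] unfolding Xplus_def by auto
qed

lemma cong_gen_subset_Theta: "cong_gen X (CS_gens X) \<subseteq> Theta X"
proof clarify
  fix u v assume "(u, v) \<in> cong_gen X (CS_gens X)"
  then show "(u, v) \<in> Theta X"
  proof (induction rule: cong_gen.induct)
    case (base u v)
    then have u: "u \<in> Xplus X" and uv: "contract\<^sup>*\<^sup>* u v"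
      using CS_gens_contract by blast+
    with contract_rtranclp_Xplus[OF uv u] rform_contract_eq[OF u uv] show ?case
      unfolding Theta_def by simp
  next
    case (mult u v p q)
    then have u: "u \<in> Xplus X" and v: "v \<in> Xplus X" and "rform u = rform v"
      unfolding Theta_def by auto
    then have "rform (p @ u @ q) = rform (p @ v @ q)"
      using rform_append[OF u mult.hyps(2,3)] rform_append[OF v mult.hyps(2,3)] by simp
    moreover have "p @ u @ q \<in> Xplus X" "p @ v @ q \<in> Xplus X"
      using u v mult.hyps(2,3) unfolding Xplus_def by auto
    ultimately show ?case
      unfolding Theta_def by simp
  qed (auto simp: Theta_def)
qed

theorem lemma2p7:
  fixes X :: "'a set"
  assumes "X \<noteq> {}"
  shows "Theta X = cong_gen X (GenI X \<union> Ups3 X \<union> Ups4 X \<union> Ups5 X)"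
  using Theta_subset_cong_gen cong_gen_subset_Theta by (rule subset_antisym)

end
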